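(* Let $\underline x\in[0,1]^n$, and let $c_1,c_2$ be two parity checks (binary vectors of length $n$) with neighborhoods $N_1,N_2\subseteq\{1,\dots,n\}$ such that all parity-check constraints of $c_1$ and of $c_2$ are satisfied by $\underline x$. Let $c=c_1\oplus c_2$ be their modulo-2 sum, whose neighborhood is $N=(N_1\cup N_2)\setminus(N_1\cap N_2)$. If $c$ generates a cut at $\underline x$ (i.e. some parity-check constraint of $c$ is violated at $\underline x$), then $N_1\cap N_2$ contains at least two indices $i$ with $0<x_i<1$.
   Context: The neighborhood of a parity check $c\in\{0,1\}^n$ is $\{i: c_i=1\}$. The parity-check constraints of a check with neighborhood $N$ are $\sum_{i\in V}x_i-\sum_{i\in N\setminus V}x_i\le |V|-1$ for all odd-sized $V\subseteq N$. A check generates a cut at $\underline x$ if one of its parity-check constraints is violated at $\underline x$. *)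

theory Defs
  imports Complex_Main
begin

text \<open>Indices are 0..n-1. A parity check is a binary vector of length n, represented
  as a function c :: nat => bool (True = 1), only entries below n being relevant.\<close>

definition nbhd :: "nat \<Rightarrow> (nat \<Rightarrow> bool) \<Rightarrow> nat set" where
  "nbhd n c = {i. i < n \<and> c i}"

definition xor_check :: "(nat \<Rightarrow> bool) \<Rightarrow> (nat \<Rightarrow> bool) \<Rightarrow> (nat \<Rightarrow> bool)" where
  "xor_check c1 c2 = (\<lambda>i. c1 i \<noteq> c2 i)"

definition pc_constraint_holds :: "nat set \<Rightarrow> nat set \<Rightarrow> (nat \<Rightarrow> real) \<Rightarrow> bool" where
  "pc_constraint_holds N V x \<longleftrightarrow>
     (\<Sum>i\<in>V. x i) - (\<Sum>i\<in>N - V. x i) \<le> real (card V) - 1"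

definition satisfies_all_pc :: "nat \<Rightarrow> (nat \<Rightarrow> bool) \<Rightarrow> (nat \<Rightarrow> real) \<Rightarrow> bool" where
  "satisfies_all_pc n c x \<longleftrightarrow>
     (\<forall>V. V \<subseteq> nbhd n c \<and> odd (card V) \<longrightarrow> pc_constraint_holds (nbhd n c) V x)"

definition generates_cut :: "nat \<Rightarrow> (nat \<Rightarrow> bool) \<Rightarrow> (nat \<Rightarrow> real) \<Rightarrow> bool" where
  "generates_cut n c x \<longleftrightarrow>
     (\<exists>V. V \<subseteq> nbhd n c \<and> odd (card V) \<and> \<not> pc_constraint_holds (nbhd n c) V x)"

end

theory Submission
  imports Defs
begin

text \<open>For x in [0,1] on N, pc_slack x N V is the l1-distance from x restricted to N to the
  indicator vector of V, and the parity-check constraint of N for V says that this distance is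
  at least 1. Let A = N1 \<inter> N2 and let V \<subseteq> sym_diff N1 N2 be odd with distance < 1.
  Completing V \<inter> N1 and V \<inter> N2 by sets S, S' \<subseteq> A, the distances for N1 and N2 add up to
  the distance for V plus the distances of x restricted to A from S and from S'. If A is
  empty, one of V \<inter> N1 and V \<inter> N2 is already odd. Otherwise, if x is integral on A except
  at one index j, the set S of indices in A - {j} where x is 1 and the set S \<union> {j} have
  opposite parities and distances x j and 1 - x j; assigning them to N1 and N2 so that both
  completions are odd gives 2 \<le> (distance for V) + 1 < 2.\<close>

definition pc_slack :: "('a \<Rightarrow> real) \<Rightarrow> 'a set \<Rightarrow> 'a set \<Rightarrow> real" where
  "pc_slack x N V = (\<Sum>i\<in>N. if i \<in> V then 1 - x i else x i)"

lemma pc_slack_nonneg: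
  assumes "\<forall>i\<in>N. 0 \<le> x i \<and> x i \<le> 1"
  shows "0 \<le> pc_slack x N V"
  unfolding pc_slack_def using assms by (intro sum_nonneg) auto

lemma pc_slack_cong:
  assumes "\<And>i. i \<in> N \<Longrightarrow> i \<in> V \<longleftrightarrow> i \<in> W"
  shows "pc_slack x N V = pc_slack x N W"
  unfolding pc_slack_def using assms by (intro sum.cong) auto

lemma pc_slack_Un_disjoint:
  assumes "finite M" "finite N" "M \<inter> N = {}"
  shows "pc_slack x (M \<union> N) V = pc_slack x M V + pc_slack x N V"
  unfolding pc_slack_def using assms by (rule sum.union_disjoint)

lemma pc_slack_symdiff:
  assumes "finite N1" "finite N2"
    and "V \<subseteq> sym_diff N1 N2" "S \<subseteq> N1 \<inter> N2" "S' \<subseteq> N1 \<inter> N2"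
  shows "pc_slack x N1 (V \<union> S) + pc_slack x N2 (V \<union> S')
    = pc_slack x (sym_diff N1 N2) V + pc_slack x (N1 \<inter> N2) S + pc_slack x (N1 \<inter> N2) S'"
proof -
  have split: "pc_slack x N (V \<union> T) = pc_slack x (N - M) V + pc_slack x (N \<inter> M) T"
    if "finite N" "T \<subseteq> N \<inter> M" "V \<inter> N \<inter> M = {}" for N M T
  proof -
    have "pc_slack x N (V \<union> T) = pc_slack x ((N - M) \<union> (N \<inter> M)) (V \<union> T)"
      by (simp add: Un_Diff_Int)
    also have "\<dots> = pc_slack x (N - M) (V \<union> T) + pc_slack x (N \<inter> M) (V \<union> T)"
      using \<open>finite N\<close> by (intro pc_slack_Un_disjoint) auto
    also have "\<dots> = pc_slack x (N - M) V + pc_slack x (N \<inter> M) T"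
      using that by (intro arg_cong2[where f = "(+)"] pc_slack_cong) auto
    finally show ?thesis .
  qed
  have "V \<inter> N1 \<inter> N2 = {}" "V \<inter> N2 \<inter> N1 = {}"
    using assms(3) by auto
  then have "pc_slack x N1 (V \<union> S) = pc_slack x (N1 - N2) V + pc_slack x (N1 \<inter> N2) S"
    and "pc_slack x N2 (V \<union> S') = pc_slack x (N2 - N1) V + pc_slack x (N1 \<inter> N2) S'"
    using split[of N1 S N2] split[of N2 S' N1] assms(1,2,4,5) by (auto simp: Int_commute)
  moreover have "pc_slack x (sym_diff N1 N2) V = pc_slack x (N1 - N2) V + pc_slack x (N2 - N1) V"
    using assms(1,2) by (intro pc_slack_Un_disjoint) auto
  ultimately show ?thesis by linarith
qed

lemma card_subset_sym_diff:
  assumes "finite N1" "finite N2" "V \<subseteq> sym_diff N1 N2"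
  shows "card V = card (V \<inter> N1) + card (V \<inter> N2)"
proof -
  have "card ((V \<inter> N1) \<union> (V \<inter> N2)) = card (V \<inter> N1) + card (V \<inter> N2)"
    using assms by (intro card_Un_disjoint) auto
  moreover have "(V \<inter> N1) \<union> (V \<inter> N2) = V"
    using assms(3) by auto
  ultimately show ?thesis
    by simp
qed

lemma pc_slack_symdiff_ge_1_of_odd_completions:
  assumes "finite N1" "finite N2"
    and sat1: "\<And>W. odd (card (W \<inter> N1)) \<Longrightarrow> 1 \<le> pc_slack x N1 W"
    and sat2: "\<And>W. odd (card (W \<inter> N2)) \<Longrightarrow> 1 \<le> pc_slack x N2 W"
    and V: "V \<subseteq> sym_diff N1 N2" and S: "S \<subseteq> N1 \<inter> N2" and S': "S' \<subseteq> N1 \<inter> N2"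
    and odd: "odd (card (V \<inter> N1) + card S)" "odd (card (V \<inter> N2) + card S')"
    and dist: "pc_slack x (N1 \<inter> N2) S + pc_slack x (N1 \<inter> N2) S' \<le> 1"
  shows "1 \<le> pc_slack x (sym_diff N1 N2) V"
proof -
  have "card ((V \<union> T) \<inter> N) = card (V \<inter> N) + card T"
    if "finite N" "T \<subseteq> N1 \<inter> N2" "T \<subseteq> N" for N T
  proof -
    have "(V \<union> T) \<inter> N = (V \<inter> N) \<union> T" "(V \<inter> N) \<inter> T = {}"
      using V that by auto
    then show ?thesis
      using that by (simp add: card_Un_disjoint finite_subset)
  qed
  note card_Un = this
  have "odd (card ((V \<union> S) \<inter> N1))" "odd (card ((V \<union> S') \<inter> N2))"
    using card_Un[OF assms(1) S] card_Un[OF assms(2) S'] odd S S' by auto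
  then have "1 \<le> pc_slack x N1 (V \<union> S)" "1 \<le> pc_slack x N2 (V \<union> S')"
    using sat1 sat2 by blast+
  then show ?thesis
    using pc_slack_symdiff[OF assms(1,2) V S S', of x] dist by linarith
qed

lemma obtain_almost_integral_index:
  fixes x :: "'a \<Rightarrow> real"
  assumes "finite A" "A \<noteq> {}" "\<forall>i\<in>A. 0 \<le> x i \<and> x i \<le> 1"
    and "card {i \<in> A. 0 < x i \<and> x i < 1} < 2"
  obtains j where "j \<in> A" "\<forall>i\<in>A - {j}. x i = 0 \<or> x i = 1"
proof -
  let ?F = "{i \<in> A. 0 < x i \<and> x i < 1}"
  have "card ?F \<le> Suc 0"
    using assms(4) by simp
  then have uniq: "a = b" if "a \<in> ?F" "b \<in> ?F" for a b
    using that card_le_Suc0_iff_eq[of ?F] assms(1) by simp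
  obtain j where j: "j \<in> A" "?F \<subseteq> {j}"
  proof (cases "?F = {}")
    case True
    then show thesis
      using assms(2) that by blast
  next
    case False
    then obtain j where "j \<in> ?F"
      by blast
    then show thesis
      using uniq that by blast
  qed
  have "x i = 0 \<or> x i = 1" if "i \<in> A - {j}" for i
    using that j(2) assms(3) by force
  then show thesis
    using that j(1) by blast
qed

lemma pc_slack_complementary_pair:
  assumes "finite A" "j \<in> A" "\<forall>i\<in>A - {j}. x i = 0 \<or> x i = 1"
  defines "S \<equiv> {i \<in> A - {j}. x i = 1}"
  shows "pc_slack x A S + pc_slack x A (insert j S) = 1"
proof -
  have remove: "pc_slack x A W = (if j \<in> W then 1 - x j else x j) + pc_slack x (A - {j}) W" for W
    unfolding pc_slack_def by (rule sum.remove[OF assms(1,2)])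
  have rest: "pc_slack x (A - {j}) W = 0" if "\<And>i. i \<in> A - {j} \<Longrightarrow> i \<in> W \<longleftrightarrow> x i = 1" for W
    unfolding pc_slack_def
  proof (rule sum.neutral, intro ballI)
    fix i
    assume "i \<in> A - {j}"
    then show "(if i \<in> W then 1 - x i else x i) = 0"
      using that[of i] assms(3) by auto
  qed
  have "pc_slack x (A - {j}) S = 0" "pc_slack x (A - {j}) (insert j S) = 0"
    by (auto intro: rest simp: S_def)
  moreover have "j \<notin> S"
    by (simp add: S_def)
  ultimately show ?thesis
    using remove[of S] remove[of "insert j S"] by simp
qed

lemma pc_slack_symdiff_ge_1_of_complementary_pair:
  assumes fin: "finite N1" "finite N2"
    and sat1: "\<And>W. odd (card (W \<inter> N1)) \<Longrightarrow> 1 \<le> pc_slack x N1 W"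
    and sat2: "\<And>W. odd (card (W \<inter> N2)) \<Longrightarrow> 1 \<le> pc_slack x N2 W"
    and V: "V \<subseteq> sym_diff N1 N2" "odd (card V)"
    and S: "S \<subseteq> N1 \<inter> N2" "j \<in> N1 \<inter> N2" "j \<notin> S"
    and pair: "pc_slack x (N1 \<inter> N2) S + pc_slack x (N1 \<inter> N2) (insert j S) \<le> 1"
  shows "1 \<le> pc_slack x (sym_diff N1 N2) V"
proof -
  have "card (insert j S) = card S + 1"
    using finite_subset[OF S(1)] fin S(3) by simp
  moreover have "odd (card (V \<inter> N1) + card (V \<inter> N2))"
    using V card_subset_sym_diff[OF fin V(1)] by simp
  moreover note completion = pc_slack_symdiff_ge_1_of_odd_completions[OF fin sat1 sat2 V(1)]
  ultimately show ?thesis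
    using completion[of S "insert j S"] completion[of "insert j S" S] S pair
    by (cases "odd (card (V \<inter> N1) + card S)") (auto simp: add.commute)
qed

lemma pc_slack_symdiff_ge_1:
  assumes fin: "finite N1" "finite N2"
    and x01: "\<forall>i\<in>N1 \<union> N2. 0 \<le> x i \<and> x i \<le> 1"
    and sat1: "\<And>W. odd (card (W \<inter> N1)) \<Longrightarrow> 1 \<le> pc_slack x N1 W"
    and sat2: "\<And>W. odd (card (W \<inter> N2)) \<Longrightarrow> 1 \<le> pc_slack x N2 W"
    and V: "V \<subseteq> sym_diff N1 N2" "odd (card V)"
    and few: "card {i \<in> N1 \<inter> N2. 0 < x i \<and> x i < 1} < 2"
  shows "1 \<le> pc_slack x (sym_diff N1 N2) V"
proof (cases "N1 \<inter> N2 = {}")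
  case True
  then have "pc_slack x (sym_diff N1 N2) V = pc_slack x N1 V + pc_slack x N2 V"
    using fin by (simp add: Diff_triv Int_commute pc_slack_Un_disjoint)
  moreover have "0 \<le> pc_slack x N1 V" "0 \<le> pc_slack x N2 V"
    using x01 by (simp_all add: pc_slack_nonneg)
  moreover have "1 \<le> pc_slack x N1 V \<or> 1 \<le> pc_slack x N2 V"
    using V card_subset_sym_diff[OF fin V(1)] sat1 sat2 by (metis odd_add)
  ultimately show ?thesis
    by linarith
next
  case False
  obtain j where j: "j \<in> N1 \<inter> N2" "\<forall>i\<in>N1 \<inter> N2 - {j}. x i = 0 \<or> x i = 1"
    using obtain_almost_integral_index[of "N1 \<inter> N2" x] fin False x01 few by auto
  define S where "S = {i \<in> N1 \<inter> N2 - {j}. x i = 1}"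
  have "pc_slack x (N1 \<inter> N2) S + pc_slack x (N1 \<inter> N2) (insert j S) = 1"
    unfolding S_def using fin j by (intro pc_slack_complementary_pair) auto
  moreover have "S \<subseteq> N1 \<inter> N2" "j \<notin> S"
    by (auto simp: S_def)
  ultimately show ?thesis
    using pc_slack_symdiff_ge_1_of_complementary_pair[OF fin sat1 sat2 V] j by auto
qed

lemma pc_constraint_holds_iff_pc_slack:
  assumes "finite N" "V \<subseteq> N"
  shows "pc_constraint_holds N V x \<longleftrightarrow> 1 \<le> pc_slack x N V"
proof -
  have "pc_slack x N V = (\<Sum>i\<in>V. 1 - x i) + (\<Sum>i\<in>N - V. x i)"
    unfolding pc_slack_def using assms
    by (simp add: sum.subset_diff[OF assms(2,1)] add.commute)
  then show ?thesis
    unfolding pc_constraint_holds_def by (simp add: sum_subtractf) linarith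
qed

lemma finite_nbhd: "finite (nbhd n c)"
  unfolding nbhd_def by simp

lemma nbhd_xor_check:
  "nbhd n (xor_check c1 c2) = sym_diff (nbhd n c1) (nbhd n c2)"
  unfolding nbhd_def xor_check_def by auto

lemma satisfies_all_pc_pc_slack:
  assumes "satisfies_all_pc n c x" "odd (card (W \<inter> nbhd n c))"
  shows "1 \<le> pc_slack x (nbhd n c) W"
proof -
  have "pc_constraint_holds (nbhd n c) (W \<inter> nbhd n c) x"
    using assms unfolding satisfies_all_pc_def by blast
  then have "1 \<le> pc_slack x (nbhd n c) (W \<inter> nbhd n c)"
    by (simp add: pc_constraint_holds_iff_pc_slack finite_nbhd)
  also have "pc_slack x (nbhd n c) (W \<inter> nbhd n c) = pc_slack x (nbhd n c) W"
    by (rule pc_slack_cong) simp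
  finally show ?thesis .
qed

lemma generates_cut_pc_slack:
  assumes "generates_cut n c x"
  obtains V where "V \<subseteq> nbhd n c" "odd (card V)" "pc_slack x (nbhd n c) V < 1"
proof -
  obtain V where "V \<subseteq> nbhd n c" "odd (card V)" "\<not> pc_constraint_holds (nbhd n c) V x"
    using assms unfolding generates_cut_def by blast
  then show thesis
    using that by (simp add: pc_constraint_holds_iff_pc_slack finite_nbhd)
qed

theorem lemma2:
  fixes n :: nat and x :: "nat \<Rightarrow> real" and c1 c2 :: "nat \<Rightarrow> bool"
  assumes "\<forall>i<n. 0 \<le> x i \<and> x i \<le> 1"
    and "satisfies_all_pc n c1 x"
    and "satisfies_all_pc n c2 x"
    and "generates_cut n (xor_check c1 c2) x"
  shows "2 \<le> card {i \<in> nbhd n c1 \<inter> nbhd n c2. 0 < x i \<and> x i < 1}"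
proof (rule ccontr)
  assume "\<not> ?thesis"
  then have few: "card {i \<in> nbhd n c1 \<inter> nbhd n c2. 0 < x i \<and> x i < 1} < 2"
    by simp
  obtain V where V: "V \<subseteq> sym_diff (nbhd n c1) (nbhd n c2)" "odd (card V)"
    and cut: "pc_slack x (sym_diff (nbhd n c1) (nbhd n c2)) V < 1"
    using generates_cut_pc_slack[OF assms(4)] unfolding nbhd_xor_check by blast
  have "\<forall>i\<in>nbhd n c1 \<union> nbhd n c2. 0 \<le> x i \<and> x i \<le> 1"
    using assms(1) by (auto simp: nbhd_def)
  then have "1 \<le> pc_slack x (sym_diff (nbhd n c1) (nbhd n c2)) V"
    using pc_slack_symdiff_ge_1[OF finite_nbhd finite_nbhd _ _ _ V few]
      satisfies_all_pc_pc_slack[OF assms(2)] satisfies_all_pc_pc_slack[OF assms(3)]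
    by blast
  with cut show False
    by simp
qed

end
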